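(* For $1\le i\le j\le n$, let $v_{ij}\in\mathbb R^{\binom{n+1}{2}}$ be the vertex of $\Gamma$ that is the characteristic vector of the singleton antichain $\{b_{ij}\}$ of $\mathcal P_n$ (the standard basis vector for the coordinate $A_{ij}$), and let $\nu_{ij}$ be the hook $(n+1-i,1^{j-i})$. Then $M_n(v_{ij})=\mathrm{val}_{\text{co-rect}}(p_\lambda)$, where $\lambda$ is the complement in the $n\times n$ square of $\nu_{ij}$ placed right-justified in the bottom right corner (i.e. $\lambda$ is the square with its last $n+1-i$ boxes of the bottom row and its last $j-i+1$ boxes of the rightmost column removed).
   Context: Lagrangian Grassmannian: $X=\mathrm{LGr}(n,2n)$, the $n$-dimensional subspaces of $\mathbb C^{2n}$ Lagrangian for $\omega_{ij}=(-1)^j\delta_{i,2n+1-j}$, in its Plücker embedding; $\mathbb C[X]$ its homogeneous coordinate ring. Plücker coordinates $p_I$ ($I$ an $n$-subset of $[2n]$) are indexed by Young diagrams in the $n\times n$ square: along the lattice path from the upper right to the lower left corner with unit steps (down or left) labelled $1,\dots,2n$, $\lambda_I$ is the diagram above the path whose vertical steps are labelled by $I$; $p_{\lambda_I}=p_I$. Valuation: for $0\le a,b\le n$ let $\mu_{a,b}=(n^a,b^{n-a})$; $\mu_{a,b}^T=\mu_{b,a}$. The co-rectangles symmetric plabic graph $G=G^{\text{co-rect}}_n$ is a reduced plabic graph with boundary vertices $1,\dots,2n$ clockwise, symmetric (in Karpman's sense) with respect to a diameter $d$ with endpoints between $2n$ and $1$ and between $n$ and $n+1$, whose faces (Rietsch–Williams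 labelling, translated to Young diagrams) are exactly the $\mu_{a,b}$, reflection in $d$ exchanging faces $\mu,\mu^T$. With $O$ the unique perfect orientation with source set $\{1,\dots,n\}$, the flow polynomial $P_J$ is the sum over flows from $[n]$ to $J$ (vertex-disjoint paths from $[n]\setminus J$ to $J\setminus[n]$) of the product over paths of the face variables $x_\mu$ to the left of the path. With $x_\mu=x_{\mu^T}$, $p_J\mapsto P_J$ embeds $\mathbb C[X]$ into Laurent polynomials; $\mathrm{val}_{\text{co-rect}}(f)$ is the exponent vector of the lexicographically minimal term (for a fixed total order of variables), with coordinates indexed by transpose-orbits of nonempty face labels, so values lie in $\mathbb Z^{\binom{n+1}{2}}$. Poset and polytope: $\mathcal P_n$ is the poset on $\{b_{ij}:1\le i\le j\le n\}$ with cover relations $b_{ij}>b_{i+1,j+1}$, $b_{ij}>b_{i,j+1}$. $\Gamma\subset\mathbb R^{\binom{n+1}{2}}$, coordinates $A_{ij}$ ordered lexicographically, is defined by $A_{ij}\ge0$ and $\sum_{j=1}^nA_{i_j,j}\le1$ for every sequence $1=i_1\le\cdots\le i_n$ with $i_{j+1}-i_j\in\{0,1\}$ (the chain polytope of $\mathcal P_n$; the tropicalized Pech–Rietsch superpotential). Matrix $M_n$: for $0\le i\le j\le n-1$ let $\lambda^{(i,j)}=(n^j,(n-1)^{n-1-j},i)$. $M_n$ is the $\binom{n+1}{2}\times\binom{n+1}{2}$ matrix whose columns are $\mathrm{val}_{\text{co-rect}}(p_{\lambda^{(i,j)}})$, ordered by $(i,j)<(i',j')$ iff $i<i'$, or $i=i'$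 and $j>j'$; rows are indexed by the transpose-orbits of nonempty face labels, represented by $n$-subsets of $[2n]$, ordered so that the subset with the larger entry at the first difference (comparing largest elements, then second largest, etc.) comes first. $M_n$ acts as a linear map $\mathbb R^{\binom{n+1}{2}}\to\mathbb R^{\binom{n+1}{2}}$ with the $k$-th domain coordinate being the $k$-th $A_{ij}$ in lexicographic order. *)

theory Defs
  imports Complex_Main
begin

text \<open>Young diagrams in the n x n square are functions r \<mapsto> length of row r (rows 1..n,
top to bottom). The n-subset I of [2n] with lambda_I = lambda: along the lattice path
from the upper right to the lower left corner with steps labelled 1..2n, the vertical
step through row r is preceded by (r-1) down steps and (n - lambda r) left steps.\<close>

definition diagram_subset :: "nat \<Rightarrow> (nat \<Rightarrow> nat) \<Rightarrow> nat set" where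
  "diagram_subset n lam = {r + n - lam r | r. r \<in> {1..n}}"

text \<open>Complement in the n x n square of a diagram nu placed right-justified in the
bottom right corner (rotated by 180 degrees).\<close>

definition complement_br :: "nat \<Rightarrow> (nat \<Rightarrow> nat) \<Rightarrow> (nat \<Rightarrow> nat)" where
  "complement_br n nu = (\<lambda>r. n - nu (n + 1 - r))"

definition hook :: "nat \<Rightarrow> nat \<Rightarrow> nat \<Rightarrow> (nat \<Rightarrow> nat)" where
  "hook n i j = (\<lambda>r. if r = 1 then n + 1 - i else if 2 \<le> r \<and> r \<le> j - i + 1 then 1 else 0)"

definition lam_ij :: "nat \<Rightarrow> nat \<Rightarrow> nat \<Rightarrow> (nat \<Rightarrow> nat)" where
  "lam_ij n i j = (\<lambda>r. if r \<le> j then n else if r \<le> n - 1 then n - 1 else i)"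

definition col_pairs :: "nat \<Rightarrow> (nat \<times> nat) list" where
  "col_pairs n = concat (map (\<lambda>i. map (\<lambda>j. (i, j)) (rev [i..<n])) [0..<n])"

definition lex_pairs :: "nat \<Rightarrow> (nat \<times> nat) list" where
  "lex_pairs n = concat (map (\<lambda>i. map (\<lambda>j. (i, j)) [i..<n+1]) [1..<n+1])"

text \<open>The matrix M_n, for a valuation val sending an n-subset J (i.e. the Pluecker
coordinate p_J) to its value vector in Z^N, whose k-th entry (k < N) is the coordinate
of the k-th row of M_n (rows in the order fixed in the paper).\<close>

definition M_mat :: "nat \<Rightarrow> (nat set \<Rightarrow> nat \<Rightarrow> int) \<Rightarrow> nat \<Rightarrow> nat \<Rightarrow> real" where
  "M_mat n val k l =
     (case col_pairs n ! l of (a, b) \<Rightarrow> real_of_int (val (diagram_subset n (lam_ij n a b)) k))"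

definition mat_apply :: "nat \<Rightarrow> (nat \<Rightarrow> nat \<Rightarrow> real) \<Rightarrow> (nat \<Rightarrow> real) \<Rightarrow> (nat \<Rightarrow> real)" where
  "mat_apply N M x = (\<lambda>k. \<Sum>l<N. M k l * x l)"

definition v_vert :: "nat \<Rightarrow> nat \<Rightarrow> nat \<Rightarrow> (nat \<Rightarrow> real)" where
  "v_vert n i j = (\<lambda>k. if k < length (lex_pairs n) \<and> lex_pairs n ! k = (i, j) then 1 else 0)"

end

theory Submission
  imports Defs
begin

text \<open>The vertex v_ij is a standard basis vector, so M_n v_ij is a column of M_n.
  Reindexing (i, j) to (i - 1, n + i - 1 - j) carries the lexicographic order of the
  coordinates A_ij onto the column order of M_n, so that column is the value of
  p_lambda for lambda = lambda^(i-1, n+i-1-j) = (n^(n+i-1-j), (n-1)^(j-i), i-1); and this is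
  exactly the square with the hook (n+1-i, 1^(j-i)) removed from its bottom right corner.\<close>

lemma mat_apply_unit_vector:
  assumes "l < N"
  shows "mat_apply N M (\<lambda>l'. if l' = l then 1 else 0) k = M k l"
  using assms by (simp add: mat_apply_def if_distrib cong: if_cong)

lemma rev_upt_eq_map_diff:
  assumes "a \<le> n"
  shows "rev [a..<n] = map (\<lambda>j. n + a - j) [Suc a..<Suc n]"
  using assms by (intro nth_equalityI) (auto simp del: upt_Suc simp: rev_nth)

lemma col_pairs_eq_map_lex_pairs:
  "col_pairs n = map (\<lambda>(i, j). (i - 1, n + i - 1 - j)) (lex_pairs n)"
proof -
  have "[1..<n+1] = map Suc [0..<n]"
    by (simp add: map_Suc_upt)
  then have "map (\<lambda>(i, j). (i - 1, n + i - 1 - j)) (lex_pairs n)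
      = concat (map (\<lambda>a. map (\<lambda>b. (a, b)) (map (\<lambda>j. n + a - j) [Suc a..<Suc n])) [0..<n])"
    by (simp add: lex_pairs_def map_concat comp_def)
  also have "\<dots> = col_pairs n"
    unfolding col_pairs_def by (intro arg_cong[where f = concat] map_cong) (simp_all add: rev_upt_eq_map_diff)
  finally show ?thesis ..
qed

lemma sum_diff_lessThan_eq_choose_two: "(\<Sum>a<n. n - a) = (n + 1) choose 2"
proof (induction n)
  case 0
  then show ?case by simp
next
  case (Suc n)
  have "(\<Sum>a<Suc n. Suc n - a) = (\<Sum>a<Suc n. (n - a) + 1)"
    by (intro sum.cong) auto
  also have "\<dots> = (\<Sum>a<n. n - a) + Suc n"
    by (simp only: sum.distrib) simp
  also have "\<dots> = (Suc n + 1) choose 2"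
    using Suc by (simp add: choose_two)
  finally show ?case .
qed

lemma length_lex_pairs: "length (lex_pairs n) = (n + 1) choose 2"
proof -
  have "length (col_pairs n) = (\<Sum>a<n. n - a)"
    by (simp add: col_pairs_def length_concat comp_def sum_list_distinct_conv_sum_set lessThan_atLeast0)
  then show ?thesis
    by (simp add: col_pairs_eq_map_lex_pairs sum_diff_lessThan_eq_choose_two)
qed

lemma distinct_lex_pairs: "distinct (lex_pairs n)"
  unfolding lex_pairs_def
  by (rule distinct_concat) (auto simp: distinct_map inj_on_def upt_conv_Cons simp del: upt_Suc)

lemma mem_lex_pairs:
  assumes "1 \<le> i" and "i \<le> j" and "j \<le> n"
  shows "(i, j) \<in> set (lex_pairs n)"
  using assms unfolding lex_pairs_def by (auto simp del: upt_Suc intro!: bexI[of _ i])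

lemma v_vert_eq_unit_vector:
  assumes "l < length (lex_pairs n)" and "lex_pairs n ! l = (i, j)"
  shows "v_vert n i j = (\<lambda>l'. if l' = l then 1 else 0)"
  using assms nth_eq_iff_index_eq[OF distinct_lex_pairs] unfolding v_vert_def by force

lemma diagram_subset_cong:
  assumes "\<And>r. r \<in> {1..n} \<Longrightarrow> f r = g r"
  shows "diagram_subset n f = diagram_subset n g"
  using assms unfolding diagram_subset_def by force

lemma lam_ij_eq_complement_hook:
  assumes "1 \<le> i" and "i \<le> j" and "j \<le> n" and "r \<in> {1..n}"
  shows "lam_ij n (i - 1) (n + i - 1 - j) r = complement_br n (hook n i j) r"
  using assms unfolding lam_ij_def complement_br_def hook_def by auto

theorem mainTheorem8:
  fixes n i j :: nat and val :: "nat set \<Rightarrow> nat \<Rightarrow> int"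
  assumes "1 \<le> i" and "i \<le> j" and "j \<le> n"
  shows "\<forall>k < (n + 1) choose 2.
           mat_apply ((n + 1) choose 2) (M_mat n val) (v_vert n i j) k
           = real_of_int (val (diagram_subset n (complement_br n (hook n i j))) k)"
proof (intro allI impI)
  fix k
  obtain l where l: "l < length (lex_pairs n)" "lex_pairs n ! l = (i, j)"
    using mem_lex_pairs[OF assms] by (auto simp: in_set_conv_nth)
  have column: "col_pairs n ! l = (i - 1, n + i - 1 - j)"
    using l by (simp add: col_pairs_eq_map_lex_pairs)
  have "mat_apply ((n + 1) choose 2) (M_mat n val) (v_vert n i j) k = M_mat n val k l"
    using l by (simp add: v_vert_eq_unit_vector mat_apply_unit_vector length_lex_pairs)
  also have "\<dots> = real_of_int (val (diagram_subset n (lam_ij n (i - 1) (n + i - 1 - j))) k)"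
    using column by (simp add: M_mat_def)
  also have "diagram_subset n (lam_ij n (i - 1) (n + i - 1 - j))
      = diagram_subset n (complement_br n (hook n i j))"
    using lam_ij_eq_complement_hook[OF assms] by (rule diagram_subset_cong)
  finally show "mat_apply ((n + 1) choose 2) (M_mat n val) (v_vert n i j) k
      = real_of_int (val (diagram_subset n (complement_br n (hook n i j))) k)" .
qed

end
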